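(* Let $p\ge1$ and $\alpha\ge\frac1p$. Then there exists a constant $c=c(\alpha,p)$ such that whenever $k,N\in\mathbb{N}$, $A\subseteq B\subset\mathbb{R}^k$ are two bounded domains of positive measure, $u\in L^{\alpha p}(B,\mathbb{R}^N)$ and $a\in\mathbb{R}^N$, then $$\frac{1}{|B|}\int_B\big|u^{\langle\alpha\rangle}-\big((u)_A\big)^{\langle\alpha\rangle}\big|^p\,dx\le\frac{c\,|B|}{|A|}\cdot\frac{1}{|B|}\int_B\big|u^{\langle\alpha\rangle}-a^{\langle\alpha\rangle}\big|^p\,dx,$$ where $(u)_A:=\frac{1}{|A|}\int_A u\,dx$.
   Context: For $v\in\mathbb{R}^N$ and $\alpha>0$, $v^{\langle\alpha\rangle}:=|v|^{\alpha-1}v$, interpreted as $0$ when $v=0$. $|A|$ denotes Lebesgue measure. *)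

theory Defs
  imports "HOL-Analysis.Analysis"
begin

text \<open>Euclidean space R^k is modelled by extensional functions on the index set {..<k}
 (the carrier of the finite product measure / product topology).\<close>

definition lebk :: "nat \<Rightarrow> (nat \<Rightarrow> real) measure" where
  "lebk k = completion (Pi\<^sub>M {..<k} (\<lambda>_. lborel))"

definition topk :: "nat \<Rightarrow> (nat \<Rightarrow> real) topology" where
  "topk k = product_topology (\<lambda>_. euclideanreal) {..<k}"

definition vnorm :: "nat \<Rightarrow> (nat \<Rightarrow> real) \<Rightarrow> real" where
  "vnorm N v = sqrt (\<Sum>i<N. (v i)\<^sup>2)"

definition bdd_domain :: "nat \<Rightarrow> (nat \<Rightarrow> real) set \<Rightarrow> bool" where
  "bdd_domain k D \<longleftrightarrow> D \<noteq> {} \<and> openin (topk k) D \<and> connectedin (topk k) D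
     \<and> (\<exists>R. \<forall>x\<in>D. vnorm k x \<le> R)"

definition spow :: "nat \<Rightarrow> real \<Rightarrow> (nat \<Rightarrow> real) \<Rightarrow> (nat \<Rightarrow> real)" where
  "spow N \<alpha> v = (if vnorm N v = 0 then (\<lambda>_. 0) else (\<lambda>i. vnorm N v powr (\<alpha> - 1) * v i))"

definition Lq_vec :: "nat \<Rightarrow> nat \<Rightarrow> real \<Rightarrow> (nat \<Rightarrow> real) set \<Rightarrow> ((nat \<Rightarrow> real) \<Rightarrow> (nat \<Rightarrow> real)) \<Rightarrow> bool" where
  "Lq_vec k N q B u \<longleftrightarrow>
     (\<forall>i<N. (\<lambda>x. u x i) \<in> borel_measurable (restrict_space (lebk k) B))
     \<and> set_integrable (lebk k) B (\<lambda>x. vnorm N (u x) powr q)"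

definition vmean :: "nat \<Rightarrow> nat \<Rightarrow> (nat \<Rightarrow> real) set \<Rightarrow> ((nat \<Rightarrow> real) \<Rightarrow> (nat \<Rightarrow> real)) \<Rightarrow> (nat \<Rightarrow> real)" where
  "vmean k N A u = (\<lambda>i. if i < N then (set_lebesgue_integral (lebk k) A (\<lambda>x. u x i)) / measure (lebk k) A else 0)"

end

theory Submission
  imports Defs
begin

(*
  Write V(v) = v^<alpha>, m = (u)_A and D = (average over A of |V(u) - V(a)|^p)^(1/p).
  By the triangle inequality on B and |A| <= |B| it suffices to show |V(m) - V(a)| <= c D.
  For every gamma > 0, |v^<gamma> - w^<gamma>| <= c (|v| + |w|)^(gamma-1) |v - w|.
  Used with gamma = 1/alpha pointwise (V is inverted by w |-> w^<1/alpha>) and averaged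
  with Jensen's inequality (all moments of order <= p of |V(u) - V(a)| are controlled by D
  since 1/alpha <= p), it bounds |m - a| by the shifted power (|a|^alpha + D)^(1/alpha-1) D,
  up to constants. Used with gamma = alpha at m, it bounds |V(m) - V(a)| by the shifted
  power (|a| + |m - a|)^(alpha-1) |m - a|, and the two shifted powers are inverse to each
  other up to constants.
*)

lemma powr_diff_one_mult_self:
  fixes x \<gamma> :: real
  assumes "0 \<le> x"
  shows "x powr (\<gamma> - 1) * x = x powr \<gamma>"
  using assms by (cases "x = 0") (auto simp: powr_mult_base mult.commute)

lemma powr_tangent_le:
  fixes s c t :: real
  assumes "s \<ge> 1" "c > 0" "t \<ge> 0"
  shows "c powr s + s * c powr (s - 1) * (t - c) \<le> t powr s"
proof (cases "t = 0")
  case True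
  then show ?thesis using assms powr_diff_one_mult_self[of c s] by (simp add: algebra_simps)
next
  case False
  have convex: "convex_on {0<..} (\<lambda>x::real. x powr s)"
  proof (rule convex_on_realI[where f'="\<lambda>x. s * x powr (s - 1)"])
    fix x :: real assume "x \<in> {0<..}"
    then show "((\<lambda>x. x powr s) has_real_derivative s * x powr (s - 1)) (at x)"
      by (auto intro!: derivative_eq_intros)
  next
    fix x y :: real assume "x \<in> {0<..}" "x \<le> y"
    then show "s * x powr (s - 1) \<le> s * y powr (s - 1)"
      using assms by (auto intro!: mult_left_mono powr_mono2)
  qed simp
  have "s * c powr (s - 1) * (t - c) \<le> t powr s - c powr s"
    by (rule convex_on_imp_above_tangent[OF convex])
      (use assms False in \<open>auto simp: interior_open intro!: derivative_eq_intros\<close>)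
  then show ?thesis by simp
qed

lemma powr_add_le_two_powr:
  fixes x y q :: real
  assumes "0 \<le> x" "0 \<le> y" "0 \<le> q"
  shows "(x + y) powr q \<le> 2 powr q * (x powr q + y powr q)"
proof -
  have "(x + y) powr q \<le> (2 * max x y) powr q" using assms by (intro powr_mono2) auto
  also have "\<dots> = 2 powr q * max x y powr q" using assms by (simp add: powr_mult)
  also have "max x y powr q \<le> x powr q + y powr q"
    by (cases "x \<le> y") (auto simp: max_def)
  finally show ?thesis by simp
qed

lemma powr_le_one_plus_powr:
  fixes t r q :: real
  assumes "0 \<le> t" "0 < r" "r \<le> q"
  shows "t powr r \<le> 1 + t powr q"
proof (cases "t \<le> 1")
  case True
  then have "t powr r \<le> 1" using assms powr_mono2[of r t 1] by simp
  then show ?thesis by (simp add: add_increasing2)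
next
  case False
  then have "t powr r \<le> t powr q" using assms by (intro powr_mono) auto
  then show ?thesis by simp
qed

lemma powr_le_two_powr_mult_powr:
  fixes \<gamma> t r :: real
  assumes "0 < t" "t \<le> r" "r \<le> 2 * t"
  shows "t powr (\<gamma> - 1) \<le> 2 powr \<bar>\<gamma> - 1\<bar> * r powr (\<gamma> - 1)"
proof (cases "\<gamma> \<ge> 1")
  case True
  have "t powr (\<gamma> - 1) \<le> r powr (\<gamma> - 1)" using True assms by (intro powr_mono2) auto
  also have "\<dots> \<le> 2 powr \<bar>\<gamma> - 1\<bar> * r powr (\<gamma> - 1)"
    using ge_one_powr_ge_zero[of 2 "\<bar>\<gamma> - 1\<bar>"] by (simp add: mult_le_cancel_right1)
  finally show ?thesis .
next
  case False
  have "t powr (\<gamma> - 1) \<le> (r / 2) powr (\<gamma> - 1)" using False assms by (intro powr_mono2') auto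
  also have "\<dots> = r powr (\<gamma> - 1) / 2 powr (\<gamma> - 1)" using assms by (simp add: powr_divide)
  also have "\<dots> = 2 powr \<bar>\<gamma> - 1\<bar> * r powr (\<gamma> - 1)"
    using False by (simp add: divide_inverse powr_minus[symmetric])
  finally show ?thesis .
qed

lemma abs_powr_diff_mult_le:
  fixes \<gamma> s t :: real
  assumes "\<gamma> > 0" "0 \<le> s" "s \<le> t" "t > 0"
  shows "\<bar>t powr (\<gamma> - 1) - s powr (\<gamma> - 1)\<bar> * s \<le> (1 + \<gamma>) * t powr (\<gamma> - 1) * (t - s)"
proof -
  define P where "P = t powr (\<gamma> - 1)"
  define Q where "Q = s powr (\<gamma> - 1)"
  have sQ: "s * Q = s powr \<gamma>" and tP: "t * P = t powr \<gamma>"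
    unfolding P_def Q_def using assms powr_diff_one_mult_self by (simp_all add: mult.commute)
  have "0 \<le> \<gamma> * P * (t - s)" using assms by (simp add: P_def)
  show ?thesis
  proof (cases "\<gamma> \<ge> 1")
    case True
    have "Q \<le> P" unfolding P_def Q_def using True assms by (intro powr_mono2) auto
    moreover have "t powr \<gamma> + \<gamma> * P * (s - t) \<le> s powr \<gamma>"
      using powr_tangent_le[of \<gamma> t s] True assms by (simp add: P_def)
    ultimately have "\<bar>P - Q\<bar> * s \<le> (\<gamma> - 1) * P * (t - s)"
      unfolding sQ[symmetric] tP[symmetric] by (simp add: algebra_simps)
    also have "\<dots> \<le> (1 + \<gamma>) * P * (t - s)"
      using assms by (intro mult_right_mono) (auto simp: P_def)
    finally show ?thesis unfolding P_def Q_def .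
  next
    case False
    show ?thesis
    proof (cases "s = 0")
      case True then show ?thesis using assms by (simp add: P_def)
    next
      case s0: False
      have "P \<le> Q" unfolding P_def Q_def using False assms s0 by (intro powr_mono2') auto
      moreover have "s powr \<gamma> \<le> t powr \<gamma>" using assms by (intro powr_mono2) auto
      ultimately have "\<bar>P - Q\<bar> * s \<le> P * (t - s)"
        unfolding sQ[symmetric] tP[symmetric] by (simp add: algebra_simps)
      then show ?thesis using \<open>0 \<le> \<gamma> * P * (t - s)\<close> unfolding P_def[symmetric] Q_def[symmetric]
        by (simp add: algebra_simps)
    qed
  qed
qed

lemma shifted_powr_le_ge_one:
  fixes \<beta> s t e :: real
  assumes "\<beta> \<ge> 1" "0 \<le> s" "0 \<le> t" "0 \<le> e" "s \<le> e + t"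
  shows "(s + t) powr (\<beta> - 1) * e \<le> 4 powr (\<beta> - 1) * (e powr \<beta> + t powr (\<beta> - 1) * e)"
proof -
  have "(s + t) powr (\<beta> - 1) \<le> (2 * (e + t)) powr (\<beta> - 1)"
    using assms by (intro powr_mono2) auto
  also have "\<dots> = 2 powr (\<beta> - 1) * (e + t) powr (\<beta> - 1)"
    using assms by (subst powr_mult) auto
  also have "\<dots> \<le> 2 powr (\<beta> - 1) * (2 powr (\<beta> - 1) * (e powr (\<beta> - 1) + t powr (\<beta> - 1)))"
    using assms by (intro mult_left_mono powr_add_le_two_powr) auto
  also have "\<dots> = 4 powr (\<beta> - 1) * (e powr (\<beta> - 1) + t powr (\<beta> - 1))"
    using powr_mult[of 2 2 "\<beta> - 1"] by simp
  finally have "(s + t) powr (\<beta> - 1) * e \<le> 4 powr (\<beta> - 1) * (e powr (\<beta> - 1) + t powr (\<beta> - 1)) * e"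
    using assms by (intro mult_right_mono) auto
  also have "\<dots> = 4 powr (\<beta> - 1) * (e powr (\<beta> - 1) * e + t powr (\<beta> - 1) * e)"
    by (simp add: algebra_simps)
  also have "e powr (\<beta> - 1) * e = e powr \<beta>"
    using assms by (simp add: powr_diff_one_mult_self)
  finally show ?thesis .
qed

lemma shifted_powr_le_lt_one:
  fixes \<beta> s t e :: real
  assumes "\<beta> < 1" "0 \<le> s" "0 \<le> e" "e \<le> s + t"
  shows "(s + t) powr (\<beta> - 1) * e \<le> e powr \<beta>"
    and "t > 0 \<Longrightarrow> (s + t) powr (\<beta> - 1) * e \<le> t powr (\<beta> - 1) * e"
proof -
  show "(s + t) powr (\<beta> - 1) * e \<le> e powr \<beta>"
  proof (cases "e = 0")
    case False
    then have "(s + t) powr (\<beta> - 1) * e \<le> e powr (\<beta> - 1) * e"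
      using assms by (intro mult_right_mono powr_mono2') auto
    then show ?thesis using assms by (simp add: powr_diff_one_mult_self)
  qed simp
  show "(s + t) powr (\<beta> - 1) * e \<le> t powr (\<beta> - 1) * e" if "t > 0"
    using assms that by (intro mult_right_mono powr_mono2') auto
qed

lemma powr_pred_mult_powr_pred_inverse:
  fixes x \<alpha> \<beta> :: real
  assumes "x > 0" "\<alpha> * \<beta> = 1"
  shows "x powr (\<alpha> - 1) * (x powr \<alpha>) powr (\<beta> - 1) = 1"
proof -
  have "x powr (\<alpha> - 1) * (x powr \<alpha>) powr (\<beta> - 1) = x powr ((\<alpha> - 1) + \<alpha> * (\<beta> - 1))"
    by (simp add: powr_powr powr_add)
  also have "(\<alpha> - 1) + \<alpha> * (\<beta> - 1) = 0" using assms by (simp add: algebra_simps)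
  finally show ?thesis using assms by simp
qed

lemma powr_pred_mult_le_of_le_powr:
  fixes \<alpha> \<beta> x y D L :: real
  assumes "0 < \<alpha>" "\<alpha> \<le> 1" "\<alpha> * \<beta> = 1" "0 \<le> x" "x \<le> y" "0 \<le> D" "0 \<le> L"
    and "x \<le> L * D powr \<beta>"
  shows "y powr (\<alpha> - 1) * x \<le> L powr \<alpha> * D"
proof (cases "x = 0")
  case False
  then have "y powr (\<alpha> - 1) * x \<le> x powr (\<alpha> - 1) * x"
    using assms by (intro mult_right_mono powr_mono2') auto
  also have "\<dots> \<le> (L * D powr \<beta>) powr \<alpha>"
    using assms by (simp add: powr_diff_one_mult_self powr_mono2)
  also have "\<dots> = L powr \<alpha> * D"
    using assms by (simp add: powr_mult powr_powr mult.commute)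
  finally show ?thesis .
qed (use assms in simp)

lemma powr_pred_mult_le_of_le_shifted:
  fixes \<alpha> \<beta> x y na D L M :: real
  assumes "\<alpha> * \<beta> = 1" "0 < na" "0 \<le> x" "y powr (\<alpha> - 1) \<le> M * na powr (\<alpha> - 1)"
    and "x \<le> L * (na powr \<alpha>) powr (\<beta> - 1) * D"
  shows "y powr (\<alpha> - 1) * x \<le> M * L * D"
proof -
  have "0 \<le> M * na powr (\<alpha> - 1)" using assms(4) powr_ge_zero order_trans by blast
  then have "y powr (\<alpha> - 1) * x \<le> M * na powr (\<alpha> - 1) * (L * (na powr \<alpha>) powr (\<beta> - 1) * D)"
    using assms by (intro mult_mono) auto
  also have "\<dots> = M * L * D"
    using powr_pred_mult_powr_pred_inverse[OF assms(2,1)] by (simp add: algebra_simps)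
  finally show ?thesis .
qed

(* With nb = na^alpha and beta = 1/alpha, the shifted powers x |-> (na + x)^(alpha-1) x and
   D |-> (nb + D)^(beta-1) D are inverse to each other up to constants: x is bounded by the
   second (in the form appropriate to alpha <= 1 resp. alpha > 1) and y is comparable to na + x. *)
lemma quasi_inverse_le_one:
  fixes \<alpha> \<beta> x y na D K :: real
  assumes "0 < \<alpha>" "\<alpha> \<le> 1" "\<alpha> * \<beta> = 1" "0 \<le> x" "x \<le> y" "na \<le> y" "0 \<le> na" "0 \<le> D" "0 \<le> K"
    and x_le: "x \<le> K * (D powr \<beta> + (na powr \<alpha>) powr (\<beta> - 1) * D)"
  shows "y powr (\<alpha> - 1) * x \<le> ((2 * K) powr \<alpha> + 2 * K) * D"
proof -
  define nb where "nb = na powr \<alpha>"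
  have "\<beta> = 1 / \<alpha>" using assms by (simp add: field_simps)
  then have "\<beta> \<ge> 1" using assms by (simp add: le_divide_eq)
  show ?thesis
  proof (cases "nb \<le> D")
    case True
    then have "nb powr (\<beta> - 1) * D \<le> D powr (\<beta> - 1) * D"
      using \<open>\<beta> \<ge> 1\<close> assms by (intro mult_right_mono powr_mono2) (auto simp: nb_def)
    then have "K * (D powr \<beta> + nb powr (\<beta> - 1) * D) \<le> K * (2 * D powr \<beta>)"
      using assms powr_diff_one_mult_self[of D \<beta>] by (intro mult_left_mono) auto
    then have "y powr (\<alpha> - 1) * x \<le> (2 * K) powr \<alpha> * D"
      using assms x_le by (intro powr_pred_mult_le_of_le_powr) (auto simp: nb_def)
    also have "\<dots> \<le> ((2 * K) powr \<alpha> + 2 * K) * D"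
      using assms by (intro mult_right_mono) auto
    finally show ?thesis .
  next
    case False
    then have "na > 0" using assms by (cases "na = 0") (auto simp: nb_def)
    have "D powr (\<beta> - 1) * D \<le> nb powr (\<beta> - 1) * D"
      using False \<open>\<beta> \<ge> 1\<close> assms by (intro mult_right_mono powr_mono2) auto
    then have "K * (D powr \<beta> + nb powr (\<beta> - 1) * D) \<le> K * (2 * nb powr (\<beta> - 1) * D)"
      using assms powr_diff_one_mult_self[of D \<beta>] by (intro mult_left_mono) linarith+
    moreover have "y powr (\<alpha> - 1) \<le> 1 * na powr (\<alpha> - 1)"
      using assms \<open>na > 0\<close> by (simp add: powr_mono2')
    ultimately have "y powr (\<alpha> - 1) * x \<le> 1 * (2 * K) * D"
      using assms x_le \<open>na > 0\<close> by (intro powr_pred_mult_le_of_le_shifted) (auto simp: nb_def)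
    also have "\<dots> \<le> ((2 * K) powr \<alpha> + 2 * K) * D"
      using assms by (intro mult_right_mono) auto
    finally show ?thesis .
  qed
qed

lemma quasi_inverse_gt_one:
  fixes \<alpha> \<beta> x y na D K :: real
  assumes "1 < \<alpha>" "\<alpha> * \<beta> = 1" "0 \<le> x" "0 \<le> y" "y \<le> x + 2 * na" "0 \<le> na" "0 \<le> D" "0 \<le> K"
    and x_le: "x \<le> K * D powr \<beta>" "na > 0 \<Longrightarrow> x \<le> K * (na powr \<alpha>) powr (\<beta> - 1) * D"
  shows "y powr (\<alpha> - 1) * x \<le> (K + 2) powr (\<alpha> - 1) * K * D"
proof -
  define nb where "nb = na powr \<alpha>"
  have "0 \<le> nb" by (simp add: nb_def)
  have "\<beta> = 1 / \<alpha>" using assms by (simp add: field_simps)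
  then have "\<beta> > 0" using assms by simp
  have na: "na = nb powr \<beta>" using assms by (cases "na = 0") (auto simp: nb_def powr_powr)
  show ?thesis
  proof (cases "nb \<le> D")
    case True
    then have "na \<le> D powr \<beta>" unfolding na using \<open>\<beta> > 0\<close> by (intro powr_mono2) (auto simp: nb_def)
    then have "y powr (\<alpha> - 1) \<le> ((K + 2) * D powr \<beta>) powr (\<alpha> - 1)"
      using x_le assms by (intro powr_mono2) (auto simp: algebra_simps)
    also have "\<dots> = (K + 2) powr (\<alpha> - 1) * D powr (\<beta> * (\<alpha> - 1))"
      using assms by (simp add: powr_mult powr_powr)
    finally have "y powr (\<alpha> - 1) * x \<le> (K + 2) powr (\<alpha> - 1) * D powr (\<beta> * (\<alpha> - 1)) * (K * D powr \<beta>)"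
      using x_le assms by (intro mult_mono) auto
    also have "\<dots> = (K + 2) powr (\<alpha> - 1) * K * D powr (\<beta> * (\<alpha> - 1) + \<beta>)"
      by (simp add: powr_add)
    also have "\<beta> * (\<alpha> - 1) + \<beta> = 1" using assms by (simp add: algebra_simps)
    finally show ?thesis using assms by simp
  next
    case False
    then have "na > 0" using assms by (cases "na = 0") (auto simp: nb_def)
    have "K * nb powr (\<beta> - 1) * D \<le> K * nb powr (\<beta> - 1) * nb"
      using False assms by (intro mult_left_mono) auto
    also have "\<dots> = K * na"
      unfolding mult.assoc powr_diff_one_mult_self[OF \<open>0 \<le> nb\<close>] na[symmetric] ..
    finally have "x \<le> K * na" using x_le(2)[OF \<open>na > 0\<close>] by (simp add: nb_def)
    then have "y powr (\<alpha> - 1) \<le> ((K + 2) * na) powr (\<alpha> - 1)"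
      using assms by (intro powr_mono2) (auto simp: algebra_simps)
    also have "\<dots> = (K + 2) powr (\<alpha> - 1) * na powr (\<alpha> - 1)"
      using assms by (simp add: powr_mult)
    finally show ?thesis
      using assms x_le(2) \<open>na > 0\<close> by (intro powr_pred_mult_le_of_le_shifted) auto
  qed
qed

lemma vnorm_eq_L2_set: "vnorm N v = L2_set v {..<N}"
  by (simp add: vnorm_def L2_set_def)

lemma vnorm_nonneg [simp]: "0 \<le> vnorm N v"
  by (simp add: vnorm_def sum_nonneg)

lemma vnorm_cong: "(\<And>i. i < N \<Longrightarrow> x i = y i) \<Longrightarrow> vnorm N x = vnorm N y"
  by (simp add: vnorm_def)

lemma vnorm_eq_0_imp: "vnorm N v = 0 \<Longrightarrow> i < N \<Longrightarrow> v i = 0"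
  unfolding vnorm_eq_L2_set by (simp add: L2_set_eq_0_iff)

lemma abs_le_vnorm:
  assumes "i < N"
  shows "\<bar>v i\<bar> \<le> vnorm N v"
proof -
  have "(v i)\<^sup>2 \<le> (\<Sum>j<N. (v j)\<^sup>2)" using assms by (intro member_le_sum) auto
  then show ?thesis unfolding vnorm_def using real_sqrt_le_mono by fastforce
qed

lemma vnorm_add_le: "vnorm N (\<lambda>i. x i + y i) \<le> vnorm N x + vnorm N y"
  unfolding vnorm_eq_L2_set by (rule L2_set_triangle_ineq)

lemma vnorm_scale: "vnorm N (\<lambda>i. c * x i) = \<bar>c\<bar> * vnorm N x"
proof -
  have "vnorm N (\<lambda>i. c * x i) = vnorm N (\<lambda>i. \<bar>c\<bar> * x i)"
    unfolding vnorm_def by (simp add: power_mult_distrib)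
  also have "\<dots> = \<bar>c\<bar> * vnorm N x"
    unfolding vnorm_eq_L2_set by (simp add: L2_set_right_distrib)
  finally show ?thesis .
qed

lemma vnorm_diff_commute: "vnorm N (\<lambda>i. x i - y i) = vnorm N (\<lambda>i. y i - x i)"
  unfolding vnorm_def by (simp add: power2_commute)

lemma vnorm_diff_triangle:
  "vnorm N (\<lambda>i. x i - z i) \<le> vnorm N (\<lambda>i. x i - y i) + vnorm N (\<lambda>i. y i - z i)"
  using vnorm_add_le[of N "\<lambda>i. x i - y i" "\<lambda>i. y i - z i"] by simp

lemma vnorm_le_vnorm_diff_add: "vnorm N x \<le> vnorm N (\<lambda>i. x i - y i) + vnorm N y"
  using vnorm_add_le[of N "\<lambda>i. x i - y i" y] by simp

lemma vnorm_diff_le: "vnorm N (\<lambda>i. x i - y i) \<le> vnorm N x + vnorm N y"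
  using vnorm_add_le[of N x "\<lambda>i. (- 1) * y i"] vnorm_scale[of N "- 1" y] by simp

lemma vnorm_diff_powr_le:
  assumes "0 \<le> p"
  shows "vnorm N (\<lambda>i. x i - z i) powr p
    \<le> 2 powr p * (vnorm N (\<lambda>i. x i - y i) powr p + vnorm N (\<lambda>i. z i - y i) powr p)"
proof -
  have "vnorm N (\<lambda>i. x i - z i) powr p \<le> (vnorm N (\<lambda>i. x i - y i) + vnorm N (\<lambda>i. z i - y i)) powr p"
    using assms vnorm_diff_triangle[of N x z y] vnorm_diff_commute[of N y z] by (intro powr_mono2) auto
  also have "\<dots> \<le> 2 powr p * (vnorm N (\<lambda>i. x i - y i) powr p + vnorm N (\<lambda>i. z i - y i) powr p)"
    using assms by (intro powr_add_le_two_powr) auto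
  finally show ?thesis .
qed

lemma borel_measurable_vnorm [measurable]:
  assumes "\<And>i. i < N \<Longrightarrow> (\<lambda>x. F x i) \<in> borel_measurable M"
  shows "(\<lambda>x. vnorm N (F x)) \<in> borel_measurable M"
  unfolding vnorm_def using assms by measurable

lemma spow_eq: "spow N \<gamma> v = (\<lambda>i. vnorm N v powr (\<gamma> - 1) * v i)"
  unfolding spow_def by auto

lemma vnorm_spow: "vnorm N (spow N \<gamma> v) = vnorm N v powr \<gamma>"
proof (cases "vnorm N v = 0")
  case True then show ?thesis by (simp add: spow_def vnorm_def)
next
  case False
  then have "vnorm N v > 0" using vnorm_nonneg[of N v] by linarith
  then show ?thesis unfolding spow_eq vnorm_scale
    by (simp add: powr_mult_base mult.commute)
qed

lemma spow_spow_inverse: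
  assumes "\<gamma> * \<delta> = 1" "\<gamma> > 0" "i < N"
  shows "spow N \<delta> (spow N \<gamma> v) i = v i"
proof (cases "vnorm N v = 0")
  case True then show ?thesis using vnorm_eq_0_imp[OF True assms(3)] by (simp add: spow_def)
next
  case False
  then have "vnorm N v > 0" using vnorm_nonneg[of N v] by linarith
  then have "(vnorm N v powr \<gamma>) powr (\<delta> - 1) * vnorm N v powr (\<gamma> - 1) = 1"
    using powr_pred_mult_powr_pred_inverse[OF _ assms(1)] by (simp add: mult.commute)
  then show ?thesis unfolding spow_eq[of N \<delta>] vnorm_spow unfolding spow_eq
    by (metis mult.assoc mult_1)
qed

lemma borel_measurable_vnorm_spow_diff [measurable]:
  assumes "\<And>i. i < N \<Longrightarrow> (\<lambda>x. u x i) \<in> borel_measurable M"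
  shows "(\<lambda>x. vnorm N (\<lambda>i. spow N \<gamma> (u x) i - c i)) \<in> borel_measurable M"
  unfolding spow_eq using assms by measurable

definition spow_diff_const :: "real \<Rightarrow> real" where
  "spow_diff_const \<gamma> = (2 + \<gamma>) * 2 powr \<bar>\<gamma> - 1\<bar>"

lemma spow_diff_const_nonneg: "\<gamma> > 0 \<Longrightarrow> 0 \<le> spow_diff_const \<gamma>"
  by (simp add: spow_diff_const_def)

lemma spow_diff_le_of_vnorm_le:
  assumes "\<gamma> > 0" "vnorm N W \<le> vnorm N V"
  shows "vnorm N (\<lambda>i. spow N \<gamma> V i - spow N \<gamma> W i)
     \<le> spow_diff_const \<gamma> * (vnorm N V + vnorm N W) powr (\<gamma> - 1) * vnorm N (\<lambda>i. V i - W i)"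
proof (cases "vnorm N V = 0")
  case True
  then have "vnorm N W = 0" using assms vnorm_nonneg[of N W] by linarith
  with True show ?thesis by (simp add: spow_eq vnorm_def)
next
  case False
  define t s where "t = vnorm N V" and "s = vnorm N W"
  define P Q where "P = t powr (\<gamma> - 1)" and "Q = s powr (\<gamma> - 1)"
  define d where "d = vnorm N (\<lambda>i. V i - W i)"
  have "0 < t" using False vnorm_nonneg[of N V] unfolding t_def by linarith
  have "0 \<le> s" "s \<le> t" using assms by (simp_all add: t_def s_def)
  have "t - s \<le> d" unfolding d_def t_def s_def using vnorm_le_vnorm_diff_add[of N V W] by simp
  have "vnorm N (\<lambda>i. spow N \<gamma> V i - spow N \<gamma> W i) = vnorm N (\<lambda>i. P * (V i - W i) + (P - Q) * W i)"
    unfolding spow_eq P_def Q_def t_def s_def by (simp add: algebra_simps)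
  also have "\<dots> \<le> vnorm N (\<lambda>i. P * (V i - W i)) + vnorm N (\<lambda>i. (P - Q) * W i)"
    by (rule vnorm_add_le)
  also have "\<dots> = P * d + \<bar>P - Q\<bar> * s" by (simp add: vnorm_scale d_def s_def P_def)
  also have "\<bar>P - Q\<bar> * s \<le> (1 + \<gamma>) * P * (t - s)"
    unfolding P_def Q_def using abs_powr_diff_mult_le[OF assms(1) \<open>0 \<le> s\<close> \<open>s \<le> t\<close> \<open>0 < t\<close>] .
  also have "(1 + \<gamma>) * P * (t - s) \<le> (1 + \<gamma>) * P * d"
    using \<open>t - s \<le> d\<close> assms by (intro mult_left_mono) (auto simp: P_def)
  also have "P * d + (1 + \<gamma>) * P * d = (2 + \<gamma>) * P * d" by (simp add: algebra_simps)
  also have "\<dots> \<le> (2 + \<gamma>) * (2 powr \<bar>\<gamma> - 1\<bar> * (t + s) powr (\<gamma> - 1)) * d"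
    unfolding P_def using powr_le_two_powr_mult_powr[of t "t + s" \<gamma>] \<open>0 < t\<close> \<open>0 \<le> s\<close> \<open>s \<le> t\<close> assms
    by (intro mult_right_mono mult_left_mono) (auto simp: d_def)
  finally show ?thesis by (simp add: spow_diff_const_def t_def s_def d_def algebra_simps)
qed

lemma spow_diff_le:
  assumes "\<gamma> > 0"
  shows "vnorm N (\<lambda>i. spow N \<gamma> V i - spow N \<gamma> W i)
     \<le> spow_diff_const \<gamma> * (vnorm N V + vnorm N W) powr (\<gamma> - 1) * vnorm N (\<lambda>i. V i - W i)"
proof (cases "vnorm N W \<le> vnorm N V")
  case False
  then have "vnorm N (\<lambda>i. spow N \<gamma> W i - spow N \<gamma> V i)
    \<le> spow_diff_const \<gamma> * (vnorm N W + vnorm N V) powr (\<gamma> - 1) * vnorm N (\<lambda>i. W i - V i)"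
    using assms by (intro spow_diff_le_of_vnorm_le) simp_all
  then show ?thesis
    using vnorm_diff_commute[of N V W] vnorm_diff_commute[of N "spow N \<gamma> V"]
    by (simp add: add.commute)
qed (use assms spow_diff_le_of_vnorm_le in blast)

lemma vnorm_diff_le_spow_diff:
  assumes "\<alpha> > 0"
  shows "vnorm N (\<lambda>i. V i - W i) \<le> spow_diff_const (1 / \<alpha>)
     * (vnorm N V powr \<alpha> + vnorm N W powr \<alpha>) powr (1 / \<alpha> - 1)
     * vnorm N (\<lambda>i. spow N \<alpha> V i - spow N \<alpha> W i)"
proof -
  have "vnorm N (\<lambda>i. V i - W i)
      = vnorm N (\<lambda>i. spow N (1 / \<alpha>) (spow N \<alpha> V) i - spow N (1 / \<alpha>) (spow N \<alpha> W) i)"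
    using assms by (intro vnorm_cong) (simp add: spow_spow_inverse)
  also have "\<dots> \<le> spow_diff_const (1 / \<alpha>)
     * (vnorm N (spow N \<alpha> V) + vnorm N (spow N \<alpha> W)) powr (1 / \<alpha> - 1)
     * vnorm N (\<lambda>i. spow N \<alpha> V i - spow N \<alpha> W i)"
    using assms by (intro spow_diff_le) simp
  finally show ?thesis by (simp add: vnorm_spow)
qed

lemma vnorm_integral_le_integral_vnorm:
  fixes f :: "'a \<Rightarrow> nat \<Rightarrow> real"
  assumes "\<And>i. i < N \<Longrightarrow> integrable M (\<lambda>x. f x i)"
    and "integrable M (\<lambda>x. vnorm N (f x))"
  shows "vnorm N (\<lambda>i. \<integral>x. f x i \<partial>M) \<le> (\<integral>x. vnorm N (f x) \<partial>M)"
proof -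
  define v where "v = (\<lambda>i. \<integral>x. f x i \<partial>M)"
  have "(vnorm N v)\<^sup>2 = (\<Sum>i<N. v i * v i)" unfolding vnorm_def by (simp add: sum_nonneg power2_eq_square)
  also have "\<dots> = (\<integral>x. (\<Sum>i<N. v i * f x i) \<partial>M)"
    using assms(1) by (simp add: v_def)
  also have "\<dots> \<le> (\<integral>x. vnorm N v * vnorm N (f x) \<partial>M)"
  proof (rule integral_mono)
    fix x
    have "(\<Sum>i<N. v i * f x i) \<le> (\<Sum>i<N. \<bar>v i\<bar> * \<bar>f x i\<bar>)"
      by (intro sum_mono) (simp add: abs_mult[symmetric])
    also have "\<dots> \<le> vnorm N v * vnorm N (f x)"
      unfolding vnorm_eq_L2_set by (rule L2_set_mult_ineq)
    finally show "(\<Sum>i<N. v i * f x i) \<le> vnorm N v * vnorm N (f x)" .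
  qed (use assms in auto)
  finally have "(vnorm N v)\<^sup>2 \<le> vnorm N v * (\<integral>x. vnorm N (f x) \<partial>M)" by simp
  then show ?thesis
    unfolding v_def[symmetric] power2_eq_square
    using vnorm_nonneg[of N v]
    by (cases "vnorm N v = 0") (auto simp: integral_nonneg_AE mult_le_cancel_left less_le)
qed

definition average :: "'a measure \<Rightarrow> ('a \<Rightarrow> real) \<Rightarrow> real" where
  "average M f = (\<integral>x. f x \<partial>M) / measure M (space M)"

lemma average_nonneg: "(\<And>x. 0 \<le> f x) \<Longrightarrow> 0 \<le> average M f"
  by (simp add: average_def integral_nonneg_AE)

lemma average_mono:
  "integrable M f \<Longrightarrow> integrable M g \<Longrightarrow> (\<And>x. f x \<le> g x) \<Longrightarrow> average M f \<le> average M g"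
  unfolding average_def by (intro divide_right_mono integral_mono) auto

lemma (in finite_measure) average_const:
  "measure M (space M) > 0 \<Longrightarrow> average M (\<lambda>_. c) = c"
  by (simp add: average_def)

lemma average_add:
  "integrable M f \<Longrightarrow> integrable M g \<Longrightarrow> average M (\<lambda>x. f x + g x) = average M f + average M g"
  by (simp add: average_def add_divide_distrib)

lemma average_mult_left: "average M (\<lambda>x. c * f x) = c * average M f"
  by (simp add: average_def)

lemma fmeasurable_of_measure_pos: "measure M A > 0 \<Longrightarrow> A \<in> fmeasurable M"
  by (metis fmeasurableI infinity_ennreal_def less_irrefl measure_notin_sets measure_zero_top top.not_eq_extremum)

lemma average_restrict_space:
  "A \<in> sets M \<Longrightarrow> average (restrict_space M A) f = (LINT x:A|M. f x) / measure M A"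
  by (simp add: average_def set_lebesgue_integral_def integral_restrict_space measure_restrict_space
      space_restrict_space sets.Int_space_eq2)

lemma set_integrable_iff_integrable_restrict_space:
  fixes f :: "'a \<Rightarrow> real"
  shows "S \<in> sets M \<Longrightarrow> set_integrable M S f \<longleftrightarrow> integrable (restrict_space M S) f"
  by (simp add: set_integrable_def integrable_restrict_space sets.Int_space_eq2)

lemma (in finite_measure) powr_average_le_average_powr:
  fixes h :: "'a \<Rightarrow> real"
  assumes pos: "measure M (space M) > 0" and "s \<ge> 1" and nonneg: "\<And>x. 0 \<le> h x"
    and "integrable M h" "integrable M (\<lambda>x. h x powr s)"
  shows "average M h powr s \<le> average M (\<lambda>x. h x powr s)"
proof (cases "average M h = 0")
  case True then show ?thesis using assms by (simp add: average_nonneg)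
next
  case False
  define c where "c = average M h"
  have "c > 0" using False nonneg average_nonneg[of h M] by (simp add: c_def)
  \<comment> \<open>Jensen's inequality: integrate the tangent line of the convex function at the mean.\<close>
  have "average M (\<lambda>x. c powr s + s * c powr (s - 1) * (h x - c)) \<le> average M (\<lambda>x. h x powr s)"
    using assms \<open>c > 0\<close> by (intro average_mono powr_tangent_le) auto
  moreover have "average M (\<lambda>x. c powr s + s * c powr (s - 1) * (h x - c)) = c powr s"
    using assms by (simp add: average_add average_mult_left average_const c_def average_def
        Bochner_Integration.integral_diff field_simps)
  ultimately show ?thesis by (simp add: c_def)
qed

lemma (in finite_measure) integrable_powr_le:
  fixes e :: "'a \<Rightarrow> real"
  assumes "0 < r" "r \<le> p" "\<And>x. 0 \<le> e x" "e \<in> borel_measurable M"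
    and "integrable M (\<lambda>x. e x powr p)"
  shows "integrable M (\<lambda>x. e x powr r)"
proof (rule Bochner_Integration.integrable_bound)
  show "integrable M (\<lambda>x. 1 + e x powr p)" using assms by auto
  show "AE x in M. norm (e x powr r) \<le> norm (1 + e x powr p)"
    using powr_le_one_plus_powr[of _ r p] assms by (auto intro!: AE_I2)
qed (use assms in measurable)

lemma (in finite_measure) average_powr_le:
  fixes e :: "'a \<Rightarrow> real"
  assumes pos: "measure M (space M) > 0" and "0 < r" "r \<le> p" "\<And>x. 0 \<le> e x"
    and "e \<in> borel_measurable M" "integrable M (\<lambda>x. e x powr p)"
  shows "average M (\<lambda>x. e x powr r) \<le> average M (\<lambda>x. e x powr p) powr (r / p)"
proof -
  define X where "X = average M (\<lambda>x. e x powr r)"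
  have "X powr (p / r) \<le> average M (\<lambda>x. (e x powr r) powr (p / r))"
    unfolding X_def using assms integrable_powr_le[OF assms(2-)]
    by (intro powr_average_le_average_powr) (auto simp: powr_powr)
  also have "(\<lambda>x. (e x powr r) powr (p / r)) = (\<lambda>x. e x powr p)"
    using assms by (simp add: powr_powr)
  finally have "(X powr (p / r)) powr (r / p) \<le> average M (\<lambda>x. e x powr p) powr (r / p)"
    using assms by (intro powr_mono2) auto
  also have "(X powr (p / r)) powr (r / p) = X"
    using assms by (simp add: powr_powr X_def average_nonneg)
  finally show ?thesis unfolding X_def .
qed

lemma (in finite_measure) integrable_vnorm_spow_diff_powr:
  fixes u :: "'a \<Rightarrow> nat \<Rightarrow> real"
  assumes "p > 0" "\<And>i. i < N \<Longrightarrow> (\<lambda>x. u x i) \<in> borel_measurable M"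
    and "integrable M (\<lambda>x. vnorm N (u x) powr (\<alpha> * p))"
  shows "integrable M (\<lambda>x. vnorm N (\<lambda>i. spow N \<alpha> (u x) i - c i) powr p)"
proof (rule Bochner_Integration.integrable_bound)
  show "integrable M (\<lambda>x. 2 powr p * (vnorm N (u x) powr (\<alpha> * p) + vnorm N c powr p))"
    using assms by auto
  have "vnorm N (\<lambda>i. spow N \<alpha> (u x) i - c i) powr p
      \<le> 2 powr p * (vnorm N (u x) powr (\<alpha> * p) + vnorm N c powr p)" for x
  proof -
    have "vnorm N (\<lambda>i. spow N \<alpha> (u x) i - c i) powr p \<le> (vnorm N (u x) powr \<alpha> + vnorm N c) powr p"
      using vnorm_diff_le[of N "spow N \<alpha> (u x)" c] assms by (intro powr_mono2) (auto simp: vnorm_spow)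
    also have "\<dots> \<le> 2 powr p * ((vnorm N (u x) powr \<alpha>) powr p + vnorm N c powr p)"
      using assms by (intro powr_add_le_two_powr) auto
    finally show ?thesis by (simp add: powr_powr)
  qed
  then show "AE x in M. norm (vnorm N (\<lambda>i. spow N \<alpha> (u x) i - c i) powr p)
      \<le> norm (2 powr p * (vnorm N (u x) powr (\<alpha> * p) + vnorm N c powr p))"
    by (intro AE_I2) simp
qed (use assms in measurable)

definition vaverage :: "'a measure \<Rightarrow> nat \<Rightarrow> ('a \<Rightarrow> nat \<Rightarrow> real) \<Rightarrow> nat \<Rightarrow> real" where
  "vaverage M N u = (\<lambda>i. if i < N then average M (\<lambda>x. u x i) else 0)"

(* The two branches are the constants produced by quasi_inverse_le_one and
   quasi_inverse_gt_one, where K is the constant of spow_diff_le for the exponent 1/alpha. *)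
definition spow_mean_const :: "real \<Rightarrow> real" where
  "spow_mean_const \<alpha> = (let K = spow_diff_const (1 / \<alpha>) in spow_diff_const \<alpha> *
    (if \<alpha> \<le> 1 then (2 * (K * 4 powr (1 / \<alpha> - 1))) powr \<alpha> + 2 * (K * 4 powr (1 / \<alpha> - 1))
     else (K + 2) powr (\<alpha> - 1) * K))"

lemma spow_mean_const_nonneg: "\<alpha> > 0 \<Longrightarrow> 0 \<le> spow_mean_const \<alpha>"
  by (simp add: spow_mean_const_def Let_def spow_diff_const_nonneg)

locale spow_mean_setting = finite_measure M
  for M :: "'a measure" +
  fixes N :: nat and u :: "'a \<Rightarrow> nat \<Rightarrow> real" and p \<alpha> :: real
  assumes space_pos: "measure M (space M) > 0"
    and p_ge_1: "1 \<le> p" and alpha_ge: "1 / p \<le> \<alpha>"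
    and u_measurable: "\<And>i. i < N \<Longrightarrow> (\<lambda>x. u x i) \<in> borel_measurable M"
    and u_integrable: "integrable M (\<lambda>x. vnorm N (u x) powr (\<alpha> * p))"
begin

abbreviation dev :: "(nat \<Rightarrow> real) \<Rightarrow> 'a \<Rightarrow> real" where
  "dev a x \<equiv> vnorm N (\<lambda>i. spow N \<alpha> (u x) i - spow N \<alpha> a i)"

abbreviation Lp_dev :: "(nat \<Rightarrow> real) \<Rightarrow> real" where
  "Lp_dev a \<equiv> average M (\<lambda>x. dev a x powr p) powr (1 / p)"

lemma alpha_p_ge_1: "1 \<le> \<alpha> * p"
  using p_ge_1 alpha_ge by (simp add: field_simps)

lemma alpha_pos: "0 < \<alpha>"
  using p_ge_1 alpha_ge by (smt (verit) divide_pos_pos)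

lemma vnorm_le_one_plus: "vnorm N (u x) \<le> 1 + vnorm N (u x) powr (\<alpha> * p)"
  using powr_le_one_plus_powr[of "vnorm N (u x)" 1 "\<alpha> * p"] alpha_p_ge_1 by simp

lemma integrable_component: "i < N \<Longrightarrow> integrable M (\<lambda>x. u x i)"
proof (rule Bochner_Integration.integrable_bound)
  show "integrable M (\<lambda>x. 1 + vnorm N (u x) powr (\<alpha> * p))" using u_integrable by auto
  show "i < N \<Longrightarrow> AE x in M. norm (u x i) \<le> norm (1 + vnorm N (u x) powr (\<alpha> * p))"
    using abs_le_vnorm[of i N] vnorm_le_one_plus by (intro AE_I2) (smt (verit) powr_ge_zero real_norm_def)
qed (use u_measurable in auto)

lemma integrable_vnorm_diff: "integrable M (\<lambda>x. vnorm N (\<lambda>i. u x i - a i))"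
proof (rule Bochner_Integration.integrable_bound)
  show "integrable M (\<lambda>x. 1 + vnorm N (u x) powr (\<alpha> * p) + vnorm N a)" using u_integrable by auto
  show "AE x in M. norm (vnorm N (\<lambda>i. u x i - a i)) \<le> norm (1 + vnorm N (u x) powr (\<alpha> * p) + vnorm N a)"
    using vnorm_diff_le[of N "u _" a] vnorm_le_one_plus
    by (intro AE_I2) (smt (verit) powr_ge_zero real_norm_def vnorm_nonneg)
qed (use u_measurable in measurable)

lemma vnorm_vaverage_diff_le:
  "vnorm N (\<lambda>i. vaverage M N u i - a i) \<le> average M (\<lambda>x. vnorm N (\<lambda>i. u x i - a i))"
proof -
  define \<mu> where "\<mu> = measure M (space M)"
  have "vnorm N (\<lambda>i. vaverage M N u i - a i) = vnorm N (\<lambda>i. (1 / \<mu>) * (\<integral>x. u x i - a i \<partial>M))"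
  proof (rule vnorm_cong)
    fix i assume "i < N"
    then show "vaverage M N u i - a i = (1 / \<mu>) * (\<integral>x. u x i - a i \<partial>M)"
      using integrable_component[of i] space_pos
      by (simp add: vaverage_def average_def \<mu>_def Bochner_Integration.integral_diff field_simps)
  qed
  also have "\<dots> = (1 / \<mu>) * vnorm N (\<lambda>i. \<integral>x. u x i - a i \<partial>M)"
    unfolding vnorm_scale using space_pos by (simp add: \<mu>_def)
  also have "\<dots> \<le> (1 / \<mu>) * (\<integral>x. vnorm N (\<lambda>i. u x i - a i) \<partial>M)"
    using space_pos integrable_component integrable_vnorm_diff
    by (intro mult_left_mono vnorm_integral_le_integral_vnorm) (auto simp: \<mu>_def)
  finally show ?thesis by (simp add: average_def \<mu>_def)
qed

lemma integrable_dev_powr: "0 < r \<Longrightarrow> r \<le> p \<Longrightarrow> integrable M (\<lambda>x. dev a x powr r)"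
  using integrable_vnorm_spow_diff_powr[of p N u \<alpha> "spow N \<alpha> a"] p_ge_1 u_measurable u_integrable
  by (intro integrable_powr_le[of r p]) auto

lemma average_dev_powr_le: "0 < r \<Longrightarrow> r \<le> p \<Longrightarrow> average M (\<lambda>x. dev a x powr r) \<le> Lp_dev a powr r"
  using average_powr_le[OF space_pos, of r p "dev a"] integrable_dev_powr[of p] p_ge_1 u_measurable
  by (simp add: powr_powr)

lemma average_le_Lp_dev:
  assumes "integrable M g" "0 < \<beta>" "\<beta> \<le> p" "0 \<le> c\<^sub>1" "0 \<le> c\<^sub>2"
    and "\<And>x. g x \<le> c\<^sub>1 * dev a x powr \<beta> + c\<^sub>2 * dev a x"
  shows "average M g \<le> c\<^sub>1 * Lp_dev a powr \<beta> + c\<^sub>2 * Lp_dev a"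
proof -
  have "dev a x powr 1 = dev a x" for x by simp
  then have "integrable M (dev a)" and avg1: "average M (dev a) \<le> Lp_dev a"
    using integrable_dev_powr[of 1 a] average_dev_powr_le[of 1 a] p_ge_1 by simp_all
  have "average M g \<le> average M (\<lambda>x. c\<^sub>1 * dev a x powr \<beta> + c\<^sub>2 * dev a x)"
    using assms integrable_dev_powr \<open>integrable M (dev a)\<close> by (intro average_mono) auto
  also have "\<dots> = c\<^sub>1 * average M (\<lambda>x. dev a x powr \<beta>) + c\<^sub>2 * average M (dev a)"
    using assms integrable_dev_powr \<open>integrable M (dev a)\<close> by (simp add: average_add average_mult_left)
  also have "\<dots> \<le> c\<^sub>1 * Lp_dev a powr \<beta> + c\<^sub>2 * Lp_dev a"
    using assms average_dev_powr_le avg1 by (intro add_mono mult_left_mono) auto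
  finally show ?thesis .
qed

lemma vnorm_diff_le_shifted_dev:
  "vnorm N (\<lambda>i. u x i - a i) \<le> spow_diff_const (1 / \<alpha>)
     * (vnorm N (u x) powr \<alpha> + vnorm N a powr \<alpha>) powr (1 / \<alpha> - 1) * dev a x"
  and vnorm_powr_le_dev_add: "vnorm N (u x) powr \<alpha> \<le> dev a x + vnorm N a powr \<alpha>"
  and dev_le_vnorm_powr_add: "dev a x \<le> vnorm N (u x) powr \<alpha> + vnorm N a powr \<alpha>"
  using vnorm_diff_le_spow_diff[OF alpha_pos]
    vnorm_le_vnorm_diff_add[of N "spow N \<alpha> (u x)" "spow N \<alpha> a"]
    vnorm_diff_le[of N "spow N \<alpha> (u x)" "spow N \<alpha> a"]
  by (simp_all add: vnorm_spow)

lemma vaverage_dist_le_of_le_one: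
  assumes "\<alpha> \<le> 1"
  shows "vnorm N (\<lambda>i. vaverage M N u i - a i) \<le> spow_diff_const (1 / \<alpha>) * 4 powr (1 / \<alpha> - 1)
     * (Lp_dev a powr (1 / \<alpha>) + (vnorm N a powr \<alpha>) powr (1 / \<alpha> - 1) * Lp_dev a)"
proof -
  define \<beta> t K where "\<beta> = 1 / \<alpha>" and "t = vnorm N a powr \<alpha>"
    and "K = spow_diff_const \<beta> * 4 powr (\<beta> - 1)"
  have "\<beta> \<ge> 1" using assms alpha_pos by (simp add: \<beta>_def)
  have "0 \<le> K" using \<open>\<beta> \<ge> 1\<close> by (simp add: K_def spow_diff_const_nonneg)
  have "vnorm N (\<lambda>i. u x i - a i) \<le> K * dev a x powr \<beta> + K * t powr (\<beta> - 1) * dev a x" for x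
  proof -
    have "(vnorm N (u x) powr \<alpha> + t) powr (\<beta> - 1) * dev a x
        \<le> 4 powr (\<beta> - 1) * (dev a x powr \<beta> + t powr (\<beta> - 1) * dev a x)"
      using \<open>\<beta> \<ge> 1\<close> vnorm_powr_le_dev_add by (intro shifted_powr_le_ge_one) (auto simp: t_def)
    then have "spow_diff_const \<beta> * (vnorm N (u x) powr \<alpha> + t) powr (\<beta> - 1) * dev a x
        \<le> spow_diff_const \<beta> * (4 powr (\<beta> - 1) * (dev a x powr \<beta> + t powr (\<beta> - 1) * dev a x))"
      using \<open>\<beta> \<ge> 1\<close> by (simp only: mult.assoc) (intro mult_left_mono spow_diff_const_nonneg; simp)
    then show ?thesis
      using vnorm_diff_le_shifted_dev[of x a] by (simp add: K_def \<beta>_def t_def algebra_simps)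
  qed
  then have "average M (\<lambda>x. vnorm N (\<lambda>i. u x i - a i)) \<le> K * Lp_dev a powr \<beta> + K * t powr (\<beta> - 1) * Lp_dev a"
    using \<open>\<beta> \<ge> 1\<close> \<open>0 \<le> K\<close> alpha_ge p_ge_1 alpha_pos integrable_vnorm_diff
    by (intro average_le_Lp_dev) (auto simp: \<beta>_def field_simps)
  then show ?thesis
    using vnorm_vaverage_diff_le[of a] by (simp add: K_def \<beta>_def t_def algebra_simps)
qed

lemma vaverage_dist_le_of_gt_one:
  assumes "1 < \<alpha>"
  shows "vnorm N (\<lambda>i. vaverage M N u i - a i) \<le> spow_diff_const (1 / \<alpha>) * Lp_dev a powr (1 / \<alpha>)"
    and "vnorm N a > 0 \<Longrightarrow> vnorm N (\<lambda>i. vaverage M N u i - a i)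
      \<le> spow_diff_const (1 / \<alpha>) * (vnorm N a powr \<alpha>) powr (1 / \<alpha> - 1) * Lp_dev a"
proof -
  define \<beta> t C where "\<beta> = 1 / \<alpha>" and "t = vnorm N a powr \<alpha>" and "C = spow_diff_const \<beta>"
  have "\<beta> < 1" "0 < \<beta>" using assms by (auto simp: \<beta>_def)
  then have "\<beta> \<le> p" using p_ge_1 by linarith
  have "0 \<le> C" using \<open>0 < \<beta>\<close> by (simp add: C_def spow_diff_const_nonneg)
  have shifted: "vnorm N (\<lambda>i. u x i - a i) \<le> C * ((vnorm N (u x) powr \<alpha> + t) powr (\<beta> - 1) * dev a x)" for x
    using vnorm_diff_le_shifted_dev[of x a] by (simp add: C_def \<beta>_def t_def mult.assoc)
  have "vnorm N (\<lambda>i. u x i - a i) \<le> C * dev a x powr \<beta> + 0 * dev a x" for x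
    using shifted[of x] shifted_powr_le_lt_one(1)[OF \<open>\<beta> < 1\<close> _ _ dev_le_vnorm_powr_add[of x a]]
      mult_left_mono[OF _ \<open>0 \<le> C\<close>] by (fastforce simp: t_def)
  then have "average M (\<lambda>x. vnorm N (\<lambda>i. u x i - a i)) \<le> C * Lp_dev a powr \<beta> + 0 * Lp_dev a"
    using \<open>0 < \<beta>\<close> \<open>\<beta> \<le> p\<close> \<open>0 \<le> C\<close> integrable_vnorm_diff by (intro average_le_Lp_dev) auto
  then show "vnorm N (\<lambda>i. vaverage M N u i - a i) \<le> spow_diff_const (1 / \<alpha>) * Lp_dev a powr (1 / \<alpha>)"
    using vnorm_vaverage_diff_le[of a] by (simp add: C_def \<beta>_def)
  assume "vnorm N a > 0"
  then have "t > 0" by (simp add: t_def)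
  have "vnorm N (\<lambda>i. u x i - a i) \<le> 0 * dev a x powr \<beta> + C * t powr (\<beta> - 1) * dev a x" for x
    using shifted[of x] shifted_powr_le_lt_one(2)[OF \<open>\<beta> < 1\<close> _ _ dev_le_vnorm_powr_add[of x a]]
      mult_left_mono[OF _ \<open>0 \<le> C\<close>] \<open>t > 0\<close> by (fastforce simp: t_def mult.assoc)
  then have "average M (\<lambda>x. vnorm N (\<lambda>i. u x i - a i)) \<le> 0 * Lp_dev a powr \<beta> + C * t powr (\<beta> - 1) * Lp_dev a"
    using \<open>0 < \<beta>\<close> \<open>\<beta> \<le> p\<close> \<open>0 \<le> C\<close> integrable_vnorm_diff by (intro average_le_Lp_dev) auto
  then show "vnorm N (\<lambda>i. vaverage M N u i - a i)
      \<le> spow_diff_const (1 / \<alpha>) * (vnorm N a powr \<alpha>) powr (1 / \<alpha> - 1) * Lp_dev a"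
    using vnorm_vaverage_diff_le[of a] by (simp add: C_def \<beta>_def t_def)
qed

lemma spow_vaverage_dist_le_of_le_one:
  assumes le_one: "\<alpha> \<le> 1"
  defines "K \<equiv> spow_diff_const (1 / \<alpha>) * 4 powr (1 / \<alpha> - 1)"
  shows "vnorm N (\<lambda>i. spow N \<alpha> (vaverage M N u) i - spow N \<alpha> a i)
    \<le> spow_diff_const \<alpha> * ((2 * K) powr \<alpha> + 2 * K) * Lp_dev a"
proof -
  define m where "m = vaverage M N u"
  have "0 \<le> K" using le_one alpha_pos by (simp add: K_def spow_diff_const_nonneg)
  have "(vnorm N m + vnorm N a) powr (\<alpha> - 1) * vnorm N (\<lambda>i. m i - a i) \<le> ((2 * K) powr \<alpha> + 2 * K) * Lp_dev a"
    using alpha_pos le_one vnorm_diff_le[of N m a] \<open>0 \<le> K\<close> vaverage_dist_le_of_le_one[OF le_one, of a]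
    by (intro quasi_inverse_le_one[of \<alpha> "1 / \<alpha>" _ _ "vnorm N a"]) (auto simp: K_def m_def)
  then have "spow_diff_const \<alpha> * ((vnorm N m + vnorm N a) powr (\<alpha> - 1) * vnorm N (\<lambda>i. m i - a i))
      \<le> spow_diff_const \<alpha> * (((2 * K) powr \<alpha> + 2 * K) * Lp_dev a)"
    using alpha_pos by (intro mult_left_mono spow_diff_const_nonneg)
  then show ?thesis
    using spow_diff_le[OF alpha_pos, of N m a] by (simp add: m_def mult.assoc)
qed

lemma spow_vaverage_dist_le_of_gt_one:
  assumes gt_one: "1 < \<alpha>"
  defines "K \<equiv> spow_diff_const (1 / \<alpha>)"
  shows "vnorm N (\<lambda>i. spow N \<alpha> (vaverage M N u) i - spow N \<alpha> a i)
    \<le> spow_diff_const \<alpha> * ((K + 2) powr (\<alpha> - 1) * K) * Lp_dev a"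
proof -
  define m where "m = vaverage M N u"
  have "0 \<le> K" using gt_one by (simp add: K_def spow_diff_const_nonneg)
  have "(vnorm N m + vnorm N a) powr (\<alpha> - 1) * vnorm N (\<lambda>i. m i - a i) \<le> (K + 2) powr (\<alpha> - 1) * K * Lp_dev a"
    using gt_one vnorm_le_vnorm_diff_add[of N m a] \<open>0 \<le> K\<close> vaverage_dist_le_of_gt_one[OF gt_one, of a]
    by (intro quasi_inverse_gt_one[of \<alpha> "1 / \<alpha>" _ _ "vnorm N a"]) (auto simp: K_def m_def)
  then have "spow_diff_const \<alpha> * ((vnorm N m + vnorm N a) powr (\<alpha> - 1) * vnorm N (\<lambda>i. m i - a i))
      \<le> spow_diff_const \<alpha> * ((K + 2) powr (\<alpha> - 1) * K * Lp_dev a)"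
    using alpha_pos by (intro mult_left_mono spow_diff_const_nonneg)
  then show ?thesis
    using spow_diff_le[OF alpha_pos, of N m a] by (simp add: m_def mult.assoc)
qed

lemma spow_vaverage_dist_le:
  "vnorm N (\<lambda>i. spow N \<alpha> (vaverage M N u) i - spow N \<alpha> a i) \<le> spow_mean_const \<alpha> * Lp_dev a"
  using spow_vaverage_dist_le_of_le_one spow_vaverage_dist_le_of_gt_one
  by (simp add: spow_mean_const_def Let_def mult.assoc)

lemma spow_vaverage_dist_powr_le:
  "vnorm N (\<lambda>i. spow N \<alpha> (vaverage M N u) i - spow N \<alpha> a i) powr p
    \<le> spow_mean_const \<alpha> powr p * average M (\<lambda>x. dev a x powr p)"
proof -
  have "0 \<le> average M (\<lambda>x. dev a x powr p)" by (simp add: average_nonneg)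
  have "vnorm N (\<lambda>i. spow N \<alpha> (vaverage M N u) i - spow N \<alpha> a i) powr p \<le> (spow_mean_const \<alpha> * Lp_dev a) powr p"
    using spow_vaverage_dist_le p_ge_1 by (intro powr_mono2) auto
  also have "\<dots> = spow_mean_const \<alpha> powr p * average M (\<lambda>x. dev a x powr p)"
    using p_ge_1 \<open>0 \<le> average M _\<close> spow_mean_const_nonneg[OF alpha_pos] by (simp add: powr_mult powr_powr)
  finally show ?thesis .
qed

end

lemma vmean_eq_vaverage:
  assumes "A \<in> sets (lebk k)"
  shows "vmean k N A u = vaverage (restrict_space (lebk k) A) N u"
  unfolding vmean_def vaverage_def average_restrict_space[OF assms] ..

lemma spow_mean_setting_restrict_space:
  assumes "A \<subseteq> B" "B \<in> sets M" "measure M A > 0" "1 \<le> p" "1 / p \<le> \<alpha>"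
    and "\<And>i. i < N \<Longrightarrow> (\<lambda>x. u x i) \<in> borel_measurable (restrict_space M B)"
    and "set_integrable M B (\<lambda>x. vnorm N (u x) powr (\<alpha> * p))"
  shows "spow_mean_setting (restrict_space M A) N u p \<alpha>"
proof (intro spow_mean_setting.intro spow_mean_setting_axioms.intro)
  have A: "A \<in> sets M" "emeasure M A < \<infinity>"
    using fmeasurable_of_measure_pos[OF assms(3)] by (auto simp: fmeasurable_def)
  have space: "space (restrict_space M A) = A"
    using A by (simp add: space_restrict_space sets.Int_space_eq2)
  show "finite_measure (restrict_space M A)"
    using A by (intro finite_measureI) (simp add: space emeasure_restrict_space)
  show "measure (restrict_space M A) (space (restrict_space M A)) > 0"
    using A assms(3) by (simp add: space measure_restrict_space)
  have "restrict_space (restrict_space M B) A = restrict_space M A"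
    using A assms by (simp add: restrict_restrict_space sets.Int_space_eq2 Int_absorb1)
  then show "(\<lambda>x. u x i) \<in> borel_measurable (restrict_space M A)" if "i < N" for i
    using measurable_restrict_space1[OF assms(6)[OF that], of A] by simp
  show "integrable (restrict_space M A) (\<lambda>x. vnorm N (u x) powr (\<alpha> * p))"
    using set_integrable_subset[OF assms(7) A(1) assms(1)] A
    by (simp add: set_integrable_def integrable_restrict_space sets.Int_space_eq2)
qed (use assms in auto)

lemma set_average_le_of_shifted_bound:
  fixes E e :: "'a \<Rightarrow> real"
  assumes "A \<subseteq> B" "B \<in> sets M" "0 < measure M A" "emeasure M B < \<infinity>"
    and e: "set_integrable M B e" "\<And>x. 0 \<le> e x"
    and E: "\<And>x. x \<in> B \<Longrightarrow> E x \<le> 2 powr p * (e x + d)"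
    and d: "0 \<le> d" "d \<le> C * ((LINT x:A|M. e x) / measure M A)" and "0 \<le> C"
  shows "(1 / measure M B) * (LINT x:B|M. E x)
    \<le> (2 powr p * (1 + C) * measure M B / measure M A) * ((1 / measure M B) * (LINT x:B|M. e x))"
proof -
  have A: "A \<in> sets M" using fmeasurable_of_measure_pos[OF assms(3)] by (simp add: fmeasurable_def)
  have "measure M A \<le> measure M B"
    by (rule measure_mono_fmeasurable[OF assms(1) A fmeasurableI[OF assms(2,4)]])
  have const: "set_integrable M B (\<lambda>_. c)" for c :: real
    using assms unfolding set_integrable_def by (intro integrable_scaleR_left integrable_real_indicator)
  have "0 \<le> (LINT x:B|M. e x)"
    unfolding set_lebesgue_integral_def using e(2) by (intro integral_nonneg_AE) (simp add: indicator_def)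
  have "(LINT x:A|M. e x) \<le> (LINT x:B|M. e x)"
    using set_integrable_subset[OF e(1) A assms(1)] e assms(1) unfolding set_lebesgue_integral_def set_integrable_def
    by (intro integral_mono) (auto simp: indicator_def)
  then have d_le: "d \<le> C * ((LINT x:B|M. e x) / measure M A)"
    using d \<open>0 \<le> C\<close> assms(3) by (smt (verit) divide_right_mono mult_left_mono)
  have "set_integrable M B (\<lambda>x. 2 powr p * (e x + d))"
    using e const by (intro set_integrable_mult_right set_integral_add(1))
  then have "(LINT x:B|M. E x) \<le> (LINT x:B|M. 2 powr p * (e x + d))"
    unfolding set_lebesgue_integral_def
    by (intro integral_mono') (auto simp: set_integrable_def indicator_def E d(1) e(2))
  also have "\<dots> = 2 powr p * ((LINT x:B|M. e x) + measure M B * d)"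
    using e const assms by (simp add: set_integral_const)
  finally have "(1 / measure M B) * (LINT x:B|M. E x)
      \<le> 2 powr p * ((LINT x:B|M. e x) / measure M B + d)"
    using assms \<open>measure M A \<le> measure M B\<close> by (simp add: field_simps)
  also have "\<dots> \<le> 2 powr p * ((LINT x:B|M. e x) / measure M A + C * ((LINT x:B|M. e x) / measure M A))"
    using d_le \<open>measure M A \<le> measure M B\<close> assms(3) \<open>0 \<le> (LINT x:B|M. e x)\<close>
    by (intro mult_left_mono add_mono divide_left_mono) auto
  also have "\<dots> = (2 powr p * (1 + C) * measure M B / measure M A) * ((1 / measure M B) * (LINT x:B|M. e x))"
    using assms \<open>measure M A \<le> measure M B\<close> by (simp add: field_simps)
  finally show ?thesis .
qed

lemma set_average_spow_dist_vaverage_le: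
  fixes M :: "'a measure"
  assumes "1 \<le> p" "1 / p \<le> \<alpha>" "A \<subseteq> B" "0 < measure M A" "0 < measure M B"
    and "\<And>i. i < N \<Longrightarrow> (\<lambda>x. u x i) \<in> borel_measurable (restrict_space M B)"
    and "set_integrable M B (\<lambda>x. vnorm N (u x) powr (\<alpha> * p))"
  defines "c \<equiv> 2 powr p * (1 + spow_mean_const \<alpha> powr p)"
  shows "(1 / measure M B) *
      (LINT x:B|M. vnorm N (\<lambda>i. spow N \<alpha> (u x) i - spow N \<alpha> (vaverage (restrict_space M A) N u) i) powr p)
    \<le> (c * measure M B / measure M A) *
      ((1 / measure M B) * (LINT x:B|M. vnorm N (\<lambda>i. spow N \<alpha> (u x) i - spow N \<alpha> a i) powr p))"
proof -
  define C where "C = spow_mean_const \<alpha>"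
  define e where "e = (\<lambda>x. vnorm N (\<lambda>i. spow N \<alpha> (u x) i - spow N \<alpha> a i) powr p)"
  define \<delta> where "\<delta> = vnorm N (\<lambda>i. spow N \<alpha> (vaverage (restrict_space M A) N u) i - spow N \<alpha> a i)"
  have A: "A \<in> sets M" and B: "B \<in> sets M" "emeasure M B < \<infinity>"
    using fmeasurable_of_measure_pos[of M A] fmeasurable_of_measure_pos[of M B] assms
    by (auto simp: fmeasurable_def)
  have "spow_mean_setting (restrict_space M S) N u p \<alpha>" if "S \<subseteq> B" "0 < measure M S" for S
    using spow_mean_setting_restrict_space[OF that(1) B(1) that(2)] assms by auto
  note setting = this[OF assms(3,4)] this[OF order.refl assms(5)]
  have "\<delta> powr p \<le> C powr p * ((LINT x:A|M. e x) / measure M A)"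
    using spow_mean_setting.spow_vaverage_dist_powr_le[OF setting(1), of a]
    by (simp add: \<delta>_def e_def C_def average_restrict_space[OF A])
  moreover have "set_integrable M B e"
    using spow_mean_setting.integrable_dev_powr[OF setting(2), of p a] assms B
    by (simp add: set_integrable_iff_integrable_restrict_space e_def)
  moreover have "vnorm N (\<lambda>i. spow N \<alpha> (u x) i - spow N \<alpha> (vaverage (restrict_space M A) N u) i) powr p
      \<le> 2 powr p * (e x + \<delta> powr p)" for x
    using vnorm_diff_powr_le[of p N] assms by (simp add: e_def \<delta>_def)
  ultimately show ?thesis
    unfolding c_def e_def[symmetric]
    by (intro set_average_le_of_shifted_bound[OF assms(3) B(1) assms(4) B(2)]) (auto simp: e_def C_def)
qed

theorem lemma3p5:
  fixes p \<alpha> :: real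
  assumes "p \<ge> 1" and "\<alpha> \<ge> 1 / p"
  shows "\<exists>c::real. \<forall>(k::nat) (N::nat) A B u (a :: nat \<Rightarrow> real).
     bdd_domain k A \<and> bdd_domain k B \<and> A \<subseteq> B
     \<and> measure (lebk k) A > 0 \<and> measure (lebk k) B > 0
     \<and> Lq_vec k N (\<alpha> * p) B u
     \<longrightarrow> (1 / measure (lebk k) B) *
           set_lebesgue_integral (lebk k) B
             (\<lambda>x. vnorm N (\<lambda>i. spow N \<alpha> (u x) i - spow N \<alpha> (vmean k N A u) i) powr p)
         \<le> (c * measure (lebk k) B / measure (lebk k) A) * ((1 / measure (lebk k) B) *
           set_lebesgue_integral (lebk k) B
             (\<lambda>x. vnorm N (\<lambda>i. spow N \<alpha> (u x) i - spow N \<alpha> a i) powr p))"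
proof (intro exI[of _ "2 powr p * (1 + spow_mean_const \<alpha> powr p)"] allI impI, elim conjE)
  fix k N A B u a
  assume AB: "A \<subseteq> B" and pos: "0 < measure (lebk k) A" "0 < measure (lebk k) B"
    and u: "Lq_vec k N (\<alpha> * p) B u"
  have "A \<in> sets (lebk k)" using fmeasurable_of_measure_pos[OF pos(1)] by (simp add: fmeasurable_def)
  then show "(1 / measure (lebk k) B) *
           set_lebesgue_integral (lebk k) B
             (\<lambda>x. vnorm N (\<lambda>i. spow N \<alpha> (u x) i - spow N \<alpha> (vmean k N A u) i) powr p)
         \<le> (2 powr p * (1 + spow_mean_const \<alpha> powr p) * measure (lebk k) B / measure (lebk k) A) *
           ((1 / measure (lebk k) B) * set_lebesgue_integral (lebk k) B
             (\<lambda>x. vnorm N (\<lambda>i. spow N \<alpha> (u x) i - spow N \<alpha> a i) powr p))"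
    using set_average_spow_dist_vaverage_le[OF assms AB pos, of N u a] u
    by (simp add: Lq_vec_def vmean_eq_vaverage)
qed

end
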